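(* For all $(t,h)\in[0,T)\times\mathbb{R}_+$, $\lim_{z\to0}\widehat J(t,z,h)=0$ and $\lim_{z\to\infty}\widehat J(t,z,h)=\infty$.
   Context: Fix constants $T>0$, $r>0$, $\mu\in\mathbb{R}$, $\sigma>0$, $\rho>0$, $m^0\ge 0$, $m^1\ge 0$, $\kappa>0$, $\delta>0$, $\alpha\in(0,1)$, $I>0$ and a number $f(I)>0$. Write $\mathbb{R}_+=(0,\infty)$, $\mathcal{O}=[0,T]\times\mathbb{R}_+^2$, $\theta=(\mu-r)/\sigma$. Let $(\Omega,\mathcal{F},\mathbb{F},\mathbb{P})$ be a complete filtered probability space satisfying the usual conditions, carrying a standard $\mathbb{F}$-Brownian motion $B$. Let $\widehat u(z,h)=(1-\alpha)(z/\alpha)^{\alpha/(\alpha-1)}h$. For $(t,z,h)\in\mathcal{O}$ and $s\in[t,T]$ let $H^2_s=he^{-\delta(s-t)}+\frac{f(I)}{\delta}(1-e^{-\delta(s-t)})$, $M^{H^2}_s=m^0+m^1(H^2_s)^{-\kappa}$, and let $Z^2$ solve $dZ^2_s=(\rho-r+M^{H^2}_s)Z^2_s\,ds-\theta Z^2_s\,dB_s$, $Z^2_t=z$. Define $W(t,z,h)=\mathbb{E}\big[\int_t^T e^{-\int_t^s(\rho+M^{H^2}_u)du}\,\widehat u(Z^2_s,H^2_s)\,ds\big]$; subscripts denote partial derivatives. For $z,h>0$ and $s\ge0$ let $H^1_s=he^{-\delta s}$, $M^{H^1}_s=m^0+m^1(H^1_s)^{-\kappa}$ and $Z^1_s=z\exp\big(-(r+\tfrac12\theta^2)s-\theta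 B_s+\int_0^s(\rho+M^{H^1}_u)du\big)$, with $\mathbb{E}_{z,h}$ the corresponding expectation. For $(t,z,h)\in\mathcal{O}$, $\widehat J(t,z,h)=\sup_{0\le\tau\le T-t}\mathbb{E}_{z,h}\Big[\int_0^\tau\Big(Iz\,e^{-rs-\theta B_s-\frac12\theta^2 s}-e^{-\int_0^s(\rho+M^{H^1}_u)du}f(I)W_h(t+s,Z^1_s,H^1_s)\Big)ds\Big]$ over $\mathbb{F}$-stopping times with values in $[0,T-t]$. *)

theory Defs
  imports "HOL-Probability.Probability"
begin

text \<open>Complete filtered probability space satisfying the usual conditions
  (time index real; only nonnegative times matter).\<close>
definition usual_filtered_prob_space :: "'a measure \<Rightarrow> (real \<Rightarrow> 'a measure) \<Rightarrow> bool" where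
  "usual_filtered_prob_space M F \<longleftrightarrow>
     prob_space M \<and> filtration (space M) F \<and> (\<forall>t. sets (F t) \<subseteq> sets M) \<and>
     (\<forall>A N. N \<in> null_sets M \<and> A \<subseteq> N \<longrightarrow> A \<in> sets (F 0)) \<and>
     (\<forall>t. sets (F t) = (\<Inter>u\<in>{t<..}. sets (F u)))"

definition std_F_brownian_motion ::
    "'a measure \<Rightarrow> (real \<Rightarrow> 'a measure) \<Rightarrow> (real \<Rightarrow> 'a \<Rightarrow> real) \<Rightarrow> bool" where
  "std_F_brownian_motion M F B \<longleftrightarrow>
     (\<forall>t\<ge>0. B t \<in> borel_measurable (F t)) \<and>
     (\<forall>\<omega>\<in>space M. B 0 \<omega> = 0 \<and> continuous_on {0..} (\<lambda>t. B t \<omega>)) \<and>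
     (\<forall>s t. 0 \<le> s \<and> s < t \<longrightarrow>
        distributed M lborel (\<lambda>\<omega>. B t \<omega> - B s \<omega>)
          (\<lambda>x. ennreal (normal_density 0 (sqrt (t - s)) x)) \<and>
        (\<forall>A\<in>sets (F s). \<forall>U\<in>sets borel.
           measure M (A \<inter> {\<omega>\<in>space M. B t \<omega> - B s \<omega> \<in> U}) =
           measure M A * measure M {\<omega>\<in>space M. B t \<omega> - B s \<omega> \<in> U}))"

definition theta :: "real \<Rightarrow> real \<Rightarrow> real \<Rightarrow> real" where
  "theta \<mu> r \<sigma> = (\<mu> - r) / \<sigma>"

definition u_hat :: "real \<Rightarrow> real \<Rightarrow> real \<Rightarrow> real" where
  "u_hat \<alpha> z h = (1 - \<alpha>) * (z / \<alpha>) powr (\<alpha> / (\<alpha> - 1)) * h"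

definition Mfun :: "real \<Rightarrow> real \<Rightarrow> real \<Rightarrow> real \<Rightarrow> real" where
  "Mfun m0 m1 \<kappa> x = m0 + m1 * x powr (- \<kappa>)"

text \<open>\<open>H2 \<delta> fI t h s\<close> is \<open>H^2_s\<close> started at \<open>(t,h)\<close>; \<open>fI\<close> stands for \<open>f(I)\<close>.\<close>
definition H2 :: "real \<Rightarrow> real \<Rightarrow> real \<Rightarrow> real \<Rightarrow> real \<Rightarrow> real" where
  "H2 \<delta> fI t h s = h * exp (- \<delta> * (s - t)) + fI / \<delta> * (1 - exp (- \<delta> * (s - t)))"

text \<open>Explicit (unique strong) solution of
  \<open>dZ = (\<rho> - r + M^{H^2}) Z ds - \<theta> Z dB\<close>, \<open>Z_t = z\<close>.\<close>
definition Z2 :: "(real \<Rightarrow> 'a \<Rightarrow> real) \<Rightarrow> real \<Rightarrow> real \<Rightarrow> real \<Rightarrow> real \<Rightarrow> real \<Rightarrow> real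
    \<Rightarrow> real \<Rightarrow> real \<Rightarrow> real \<Rightarrow> real \<Rightarrow> real \<Rightarrow> real \<Rightarrow> real \<Rightarrow> 'a \<Rightarrow> real" where
  "Z2 B r \<mu> \<sigma> \<rho> m0 m1 \<kappa> \<delta> fI t z h s \<omega> =
     z * exp (integral {t..s} (\<lambda>u. \<rho> - r + Mfun m0 m1 \<kappa> (H2 \<delta> fI t h u))
              - theta \<mu> r \<sigma> * (B s \<omega> - B t \<omega>) - (theta \<mu> r \<sigma>)\<^sup>2 / 2 * (s - t))"

definition W :: "'a measure \<Rightarrow> (real \<Rightarrow> 'a \<Rightarrow> real) \<Rightarrow> real \<Rightarrow> real \<Rightarrow> real \<Rightarrow> real \<Rightarrow> real
    \<Rightarrow> real \<Rightarrow> real \<Rightarrow> real \<Rightarrow> real \<Rightarrow> real \<Rightarrow> real \<Rightarrow> real \<Rightarrow> real \<Rightarrow> real \<Rightarrow> real" where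
  "W M B T r \<mu> \<sigma> \<rho> m0 m1 \<kappa> \<delta> \<alpha> fI t z h =
     (\<integral>\<omega>. integral {t..T} (\<lambda>s.
         exp (- integral {t..s} (\<lambda>u. \<rho> + Mfun m0 m1 \<kappa> (H2 \<delta> fI t h u)))
         * u_hat \<alpha> (Z2 B r \<mu> \<sigma> \<rho> m0 m1 \<kappa> \<delta> fI t z h s \<omega>) (H2 \<delta> fI t h s)) \<partial>M)"

definition W_h :: "'a measure \<Rightarrow> (real \<Rightarrow> 'a \<Rightarrow> real) \<Rightarrow> real \<Rightarrow> real \<Rightarrow> real \<Rightarrow> real \<Rightarrow> real
    \<Rightarrow> real \<Rightarrow> real \<Rightarrow> real \<Rightarrow> real \<Rightarrow> real \<Rightarrow> real \<Rightarrow> real \<Rightarrow> real \<Rightarrow> real \<Rightarrow> real" where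
  "W_h M B T r \<mu> \<sigma> \<rho> m0 m1 \<kappa> \<delta> \<alpha> fI t z h =
     deriv (\<lambda>h'. W M B T r \<mu> \<sigma> \<rho> m0 m1 \<kappa> \<delta> \<alpha> fI t z h') h"

definition H1 :: "real \<Rightarrow> real \<Rightarrow> real \<Rightarrow> real" where
  "H1 \<delta> h s = h * exp (- \<delta> * s)"

definition Z1 :: "(real \<Rightarrow> 'a \<Rightarrow> real) \<Rightarrow> real \<Rightarrow> real \<Rightarrow> real \<Rightarrow> real \<Rightarrow> real \<Rightarrow> real
    \<Rightarrow> real \<Rightarrow> real \<Rightarrow> real \<Rightarrow> real \<Rightarrow> real \<Rightarrow> 'a \<Rightarrow> real" where
  "Z1 B r \<mu> \<sigma> \<rho> m0 m1 \<kappa> \<delta> z h s \<omega> =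
     z * exp (- (r + (theta \<mu> r \<sigma>)\<^sup>2 / 2) * s - theta \<mu> r \<sigma> * B s \<omega>
              + integral {0..s} (\<lambda>u. \<rho> + Mfun m0 m1 \<kappa> (H1 \<delta> h u)))"

definition J_hat :: "'a measure \<Rightarrow> (real \<Rightarrow> 'a measure) \<Rightarrow> (real \<Rightarrow> 'a \<Rightarrow> real) \<Rightarrow> real
    \<Rightarrow> real \<Rightarrow> real \<Rightarrow> real \<Rightarrow> real \<Rightarrow> real \<Rightarrow> real \<Rightarrow> real \<Rightarrow> real \<Rightarrow> real \<Rightarrow> real \<Rightarrow> real
    \<Rightarrow> real \<Rightarrow> real \<Rightarrow> real \<Rightarrow> ereal" where
  "J_hat M F B T r \<mu> \<sigma> \<rho> m0 m1 \<kappa> \<delta> \<alpha> I fI t z h =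
     (SUP \<tau>\<in>{\<tau>. stopping_time F \<tau> \<and> (\<forall>\<omega>\<in>space M. 0 \<le> \<tau> \<omega> \<and> \<tau> \<omega> \<le> T - t)}.
        ereal (\<integral>\<omega>. integral {0..\<tau> \<omega>} (\<lambda>s.
            I * z * exp (- r * s - theta \<mu> r \<sigma> * B s \<omega> - (theta \<mu> r \<sigma>)\<^sup>2 / 2 * s)
            - exp (- integral {0..s} (\<lambda>u. \<rho> + Mfun m0 m1 \<kappa> (H1 \<delta> h u))) * fI
              * W_h M B T r \<mu> \<sigma> \<rho> m0 m1 \<kappa> \<delta> \<alpha> fI (t + s)
                  (Z1 B r \<mu> \<sigma> \<rho> m0 m1 \<kappa> \<delta> z h s \<omega>) (H1 \<delta> h s)) \<partial>M))"

end

theory Submission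
  imports Defs
begin

text \<open>Since \<open>u_hat\<close> is homogeneous of degree \<open>p = \<alpha> / (\<alpha> - 1) < 0\<close> in \<open>z\<close> and \<open>Z^2\<close>
  is \<open>z\<close> times the exponential of a Brownian motion with drift, the Gaussian moment generating
  function gives \<open>W(t, z, h) = (z / \<alpha>)^p \<Phi>(h, T - t)\<close> for a deterministic \<open>\<Phi>\<close>.
  Differentiating under the integral sign, \<open>W_h = (z / \<alpha>)^p \<Psi>\<close> with \<open>\<Psi> \<ge> 0\<close>, because the
  mortality rate \<open>m0 + m1 H^(-\<kappa>)\<close> decreases in health and \<open>p < 1\<close>. The running reward of the
  stopping problem is therefore a gain \<open>I z e^(-r s - \<theta> B_s - \<theta>^2 s / 2)\<close>, of expectation
  \<open>I z e^(-r s)\<close>, minus a nonnegative penalty whose expectation is \<open>(z / \<alpha>)^p\<close> times a rate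
  independent of \<open>z\<close>. With \<open>A = int_0^(T-t) e^(-r s) ds\<close>, stopping at once gives \<open>J \<ge> 0\<close>,
  dropping the penalty gives \<open>J \<le> I z A\<close>, and stopping at \<open>T - t\<close> gives
  \<open>J \<ge> I z A - C (z / \<alpha>)^p\<close>; both limits follow because \<open>(z / \<alpha>)^p \<rightarrow> 0\<close> as \<open>z \<rightarrow> \<infinity>\<close>.\<close>

lemma normal_density_mult_exp:
  fixes s k x :: real
  assumes "s > 0"
  shows "normal_density 0 s x * exp (k * x) = exp (k\<^sup>2 * s\<^sup>2 / 2) * normal_density (k * s\<^sup>2) s x"
proof -
  have "- x\<^sup>2 / (2 * s\<^sup>2) + k * x = k\<^sup>2 * s\<^sup>2 / 2 + - (x - k * s\<^sup>2)\<^sup>2 / (2 * s\<^sup>2)"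
    using assms by (simp add: field_simps power2_eq_square)
  then have "exp (- x\<^sup>2 / (2 * s\<^sup>2)) * exp (k * x)
      = exp (k\<^sup>2 * s\<^sup>2 / 2) * exp (- (x - k * s\<^sup>2)\<^sup>2 / (2 * s\<^sup>2))"
    by (metis exp_add)
  then show ?thesis
    unfolding normal_density_def by (simp add: algebra_simps)
qed

lemma
  fixes X :: "'a \<Rightarrow> real" and s k :: real
  assumes X: "distributed M lborel X (\<lambda>x. ennreal (normal_density 0 s x))" and "s > 0"
  shows integrable_exp_normal: "integrable M (\<lambda>\<omega>. exp (k * X \<omega>))"
    and integral_exp_normal: "(\<integral>\<omega>. exp (k * X \<omega>) \<partial>M) = exp (k\<^sup>2 * s\<^sup>2 / 2)"
proof -
  have density: "(\<lambda>x. normal_density 0 s x * exp (k * x))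
      = (\<lambda>x. exp (k\<^sup>2 * s\<^sup>2 / 2) * normal_density (k * s\<^sup>2) s x)"
    using normal_density_mult_exp[OF \<open>s > 0\<close>] by auto
  have "integrable lborel (\<lambda>x. normal_density 0 s x * exp (k * x))"
    unfolding density using \<open>s > 0\<close> by simp
  then show "integrable M (\<lambda>\<omega>. exp (k * X \<omega>))"
    using distributed_integrable[OF X, of "\<lambda>x. exp (k * x)"] by simp
  have "(\<integral>x. normal_density 0 s x * exp (k * x) \<partial>lborel) = exp (k\<^sup>2 * s\<^sup>2 / 2)"
    unfolding density using \<open>s > 0\<close> by simp
  then show "(\<integral>\<omega>. exp (k * X \<omega>) \<partial>M) = exp (k\<^sup>2 * s\<^sup>2 / 2)"
    using distributed_integral[OF X, of "\<lambda>x. exp (k * x)"] by simp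
qed

lemma powr_mult_exp:
  fixes a x p :: real
  shows "(a * exp x) powr p = a powr p * exp (p * x)"
  by (simp add: exp_powr_real powr_mult)

lemma u_hat_mult_exp:
  "u_hat \<alpha> (z * exp x) h
     = (1 - \<alpha>) * (z / \<alpha>) powr (\<alpha> / (\<alpha> - 1)) * exp (\<alpha> / (\<alpha> - 1) * x) * h"
proof -
  have "z * exp x / \<alpha> = z / \<alpha> * exp x" by simp
  then show ?thesis
    unfolding u_hat_def by (simp only: powr_mult_exp)
qed

lemma LIMSEQ_floor_grid: "(\<lambda>n. real_of_int \<lfloor>x * real (Suc n)\<rfloor> / real (Suc n)) \<longlonglongrightarrow> x"
proof (rule tendsto_sandwich[OF always_eventually always_eventually])
  show "(\<lambda>n. x - 1 / real (Suc n)) \<longlonglongrightarrow> x"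
    using tendsto_diff[OF tendsto_const LIMSEQ_inverse_real_of_nat, of x]
    by (simp add: inverse_eq_divide)
  show "\<forall>n. x - 1 / real (Suc n) \<le> real_of_int \<lfloor>x * real (Suc n)\<rfloor> / real (Suc n)"
  proof
    fix n
    have "x * real (Suc n) - 1 \<le> real_of_int \<lfloor>x * real (Suc n)\<rfloor>"
      using real_of_int_floor_gt_diff_one[of "x * real (Suc n)"] by linarith
    then have "(x * real (Suc n) - 1) / real (Suc n) \<le> real_of_int \<lfloor>x * real (Suc n)\<rfloor> / real (Suc n)"
      by (rule divide_right_mono) simp
    then show "x - 1 / real (Suc n) \<le> real_of_int \<lfloor>x * real (Suc n)\<rfloor> / real (Suc n)"
      by (simp add: diff_divide_distrib)
  qed
  show "\<forall>n. real_of_int \<lfloor>x * real (Suc n)\<rfloor> / real (Suc n) \<le> x"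
    by (simp add: field_simps)
qed simp

lemma integral_shift_Icc:
  fixes f :: "real \<Rightarrow> real"
  shows "integral {a..b} (\<lambda>s. f (s - a)) = integral {0..b - a} f"
  using integral_shift_Icc_real[of 0 "b - a" "\<lambda>s. f (s - a)" a] by (simp add: o_def)

lemma integral_Icc_rescale_unit:
  fixes f :: "real \<Rightarrow> real"
  assumes "0 \<le> L"
  shows "integral {0..L} f = L * integral {0..1} (\<lambda>w. f (L * w))"
proof (cases "L = 0")
  case False
  then have "L > 0" using assms by simp
  have "integral ((\<lambda>x. x / L) ` {0..L}) (\<lambda>x. f (L * x)) = (1 / \<bar>L\<bar>) *\<^sub>R integral {0..L} f"
    by (rule integral_stretch_real) (use \<open>L > 0\<close> in simp)
  moreover have "(\<lambda>x. x / L) ` {0..L} = {0..1}" using \<open>L > 0\<close> by simp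
  ultimately show ?thesis using \<open>L > 0\<close> by simp
qed simp

lemma continuous_on_integral_upto_param:
  fixes f :: "'a::topological_space \<Rightarrow> real \<Rightarrow> real"
  assumes f: "continuous_on (U \<times> {0..b}) (\<lambda>(x, t). f x t)"
  shows "continuous_on (U \<times> {0..b}) (\<lambda>(x, L). integral {0..L} (f x))"
proof -
  let ?g = "\<lambda>y::('a \<times> real) \<times> real. (fst (fst y), snd (fst y) * snd y)"
  have im: "?g ` ((U \<times> {0..b}) \<times> cbox 0 1) \<subseteq> U \<times> {0..b}"
  proof (rule image_subsetI)
    fix y :: "('a \<times> real) \<times> real" assume "y \<in> (U \<times> {0..b}) \<times> cbox 0 1"
    moreover have "snd (fst y) * snd y \<le> snd (fst y)" if "0 \<le> snd (fst y)" "snd y \<le> 1"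
      using mult_left_le that by blast
    ultimately show "?g y \<in> U \<times> {0..b}"
      by (auto simp: mem_Times_iff)
  qed
  have "continuous_on ((U \<times> {0..b}) \<times> cbox 0 1) ?g"
    by (intro continuous_intros)
  from continuous_on_compose[OF this continuous_on_subset[OF f im]]
  have "continuous_on ((U \<times> {0..b}) \<times> cbox 0 1) (\<lambda>(xL, w). f (fst xL) (snd xL * w))"
    by (simp add: o_def split_beta)
  then have "continuous_on (U \<times> {0..b}) (\<lambda>xL. integral (cbox 0 1) (\<lambda>w. f (fst xL) (snd xL * w)))"
    by (rule integral_continuous_on_param)
  then have "continuous_on (U \<times> {0..b})
      (\<lambda>xL. snd xL * integral (cbox 0 1) (\<lambda>w. f (fst xL) (snd xL * w)))"
    by (intro continuous_intros)
  then show ?thesis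
  proof (rule continuous_on_eq)
    fix x assume "x \<in> U \<times> {0..b}"
    then show "snd x * integral (cbox 0 1) (\<lambda>w. f (fst x) (snd x * w))
        = (\<lambda>(x, L). integral {0..L} (f x)) x"
      using integral_Icc_rescale_unit[of "snd x" "f (fst x)"] by (auto simp: case_prod_beta')
  qed
qed

lemma continuous_on_slice:
  assumes "continuous_on (U \<times> V) (\<lambda>(x, y). f x y)" and "u \<in> U"
  shows "continuous_on V (f u)"
  using continuous_on_compose2[OF assms(1) continuous_on_Pair[OF continuous_on_const continuous_on_id]]
    assms(2)
  by auto

lemma integral_le_integral_nonneg_superinterval:
  fixes f g :: "real \<Rightarrow> real"
  assumes g: "g integrable_on {a..c}" and "a \<le> b" "b \<le> c"
    and g_nonneg: "\<And>x. x \<in> {a..c} \<Longrightarrow> 0 \<le> g x"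
    and le: "\<And>x. x \<in> {a..b} \<Longrightarrow> f x \<le> g x"
  shows "integral {a..b} f \<le> integral {a..c} g"
proof -
  have g_sub: "g integrable_on {a..b}"
    by (rule integrable_on_subinterval[OF g]) (use assms in auto)
  have "integral {a..b} f \<le> integral {a..b} g"
  proof (cases "f integrable_on {a..b}")
    case True
    then show ?thesis by (rule integral_le[OF _ g_sub le])
  next
    case False
    then show ?thesis
      using integral_nonneg[OF g_sub] g_nonneg \<open>b \<le> c\<close> by (simp add: not_integrable_integral)
  qed
  also have "\<dots> \<le> integral {a..c} g"
    by (rule integral_subset_le[OF _ g_sub g]) (use assms in auto)
  finally show ?thesis .
qed

lemma has_field_derivative_integral_upto:
  fixes f fx :: "real \<Rightarrow> real \<Rightarrow> real"
  assumes deriv: "\<And>x t. 0 < x \<Longrightarrow> t \<in> {0..L} \<Longrightarrow> ((\<lambda>x. f x t) has_field_derivative fx x t) (at x)"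
    and f: "continuous_on ({0<..} \<times> {0..L}) (\<lambda>(x, t). f x t)"
    and fx: "continuous_on ({0<..} \<times> {0..L}) (\<lambda>(x, t). fx x t)"
    and "0 < h"
  shows "((\<lambda>x. integral {0..L} (f x)) has_field_derivative integral {0..L} (fx h)) (at h)"
proof -
  have "((\<lambda>x. integral (cbox 0 L) (f x)) has_field_derivative integral (cbox 0 L) (fx h))
      (at h within {0<..})"
  proof (rule leibniz_rule_field_derivative)
    show "((\<lambda>x. f x t) has_field_derivative fx x t) (at x within {0<..})"
      if "x \<in> {0<..}" "t \<in> cbox 0 L" for x t
      using deriv[of x t] that by (simp add: has_field_derivative_at_within)
    show "f x integrable_on cbox 0 L" if "x \<in> {0<..}" for x
      using continuous_on_slice[OF f that] by (simp add: integrable_continuous_real)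
  qed (use fx \<open>0 < h\<close> in auto)
  then show ?thesis
    using at_within_open[of h "{0<..}"] \<open>0 < h\<close> by simp
qed

lemma lborel_integral_indicator_Icc:
  fixes h :: "real \<Rightarrow> real"
  assumes "continuous_on {a..b} h"
  shows "(\<integral>s. indicator {a..b} s * h s \<partial>lborel) = integral {a..b} h"
  using borel_integrable_compact[OF compact_Icc assms] set_borel_integral_eq_integral(2)[of "{a..b}" h]
  unfolding set_integrable_def set_lebesgue_integral_def by simp

section \<open>Brownian exponential functionals\<close>

locale std_brownian_setting =
  fixes M :: "'a measure" and F :: "real \<Rightarrow> 'a measure" and B :: "real \<Rightarrow> 'a \<Rightarrow> real"
  assumes usual: "usual_filtered_prob_space M F" and brownian: "std_F_brownian_motion M F B"
begin

sublocale prob_space M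
  using usual unfolding usual_filtered_prob_space_def by blast

lemma borel_measurable_B:
  assumes "0 \<le> t"
  shows "B t \<in> borel_measurable M"
proof (rule measurable_from_subalg)
  have "filtration (space M) F" and "sets (F t) \<subseteq> sets M"
    using usual unfolding usual_filtered_prob_space_def by blast+
  then show "subalgebra M (F t)"
    unfolding subalgebra_def by (simp add: filtration.space_F)
  show "B t \<in> borel_measurable (F t)"
    using brownian assms unfolding std_F_brownian_motion_def by blast
qed

lemma B_0: "\<omega> \<in> space M \<Longrightarrow> B 0 \<omega> = 0"
  using brownian unfolding std_F_brownian_motion_def by blast

lemma continuous_on_path: "\<omega> \<in> space M \<Longrightarrow> continuous_on {0..} (\<lambda>t. B t \<omega>)"
  using brownian unfolding std_F_brownian_motion_def by blast

lemma continuous_on_path_Icc: "\<omega> \<in> space M \<Longrightarrow> 0 \<le> a \<Longrightarrow> continuous_on {a..b} (\<lambda>t. B t \<omega>)"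
  using continuous_on_subset[OF continuous_on_path] by auto

lemma
  assumes "0 \<le> a" "a \<le> s"
  shows integrable_exp_increment: "integrable M (\<lambda>\<omega>. exp (k * (B s \<omega> - B a \<omega>)))"
    and integral_exp_increment: "(\<integral>\<omega>. exp (k * (B s \<omega> - B a \<omega>)) \<partial>M) = exp (k\<^sup>2 * (s - a) / 2)"
proof -
  have "integrable M (\<lambda>\<omega>. exp (k * (B s \<omega> - B a \<omega>))) \<and>
      (\<integral>\<omega>. exp (k * (B s \<omega> - B a \<omega>)) \<partial>M) = exp (k\<^sup>2 * (s - a) / 2)"
  proof (cases "s = a")
    case True
    then show ?thesis by (simp add: prob_space)
  next
    case False
    with assms have "a < s" by simp
    then have X: "distributed M lborel (\<lambda>\<omega>. B s \<omega> - B a \<omega>)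
        (\<lambda>x. ennreal (normal_density 0 (sqrt (s - a)) x))"
      using brownian assms unfolding std_F_brownian_motion_def by blast
    have "sqrt (s - a) > 0" and "(sqrt (s - a))\<^sup>2 = s - a"
      using \<open>a < s\<close> by auto
    then show ?thesis
      using integrable_exp_normal[OF X] integral_exp_normal[OF X] by simp
  qed
  then show "integrable M (\<lambda>\<omega>. exp (k * (B s \<omega> - B a \<omega>)))"
    and "(\<integral>\<omega>. exp (k * (B s \<omega> - B a \<omega>)) \<partial>M) = exp (k\<^sup>2 * (s - a) / 2)"
    by auto
qed

text \<open>The approximations that freeze the path on a grid of mesh \<open>1 / Suc n\<close> take countably
  many values and converge by path continuity.\<close>

lemma borel_measurable_path_pair:
  "(\<lambda>x. B (max 0 (fst x)) (snd x)) \<in> borel_measurable (lborel \<Otimes>\<^sub>M M)"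
proof (rule borel_measurable_LIMSEQ_real)
  define grid where "grid n s = real_of_int \<lfloor>s * real (Suc n)\<rfloor> / real (Suc n)" for n s
  show "(\<lambda>x. B (max 0 (grid n (fst x))) (snd x)) \<in> borel_measurable (lborel \<Otimes>\<^sub>M M)" for n
  proof -
    have "(\<lambda>x. (\<lambda>i. B (max 0 (real_of_int i / real (Suc n))) (snd x)) \<lfloor>fst x * real (Suc n)\<rfloor>)
        \<in> borel_measurable (lborel \<Otimes>\<^sub>M M)"
    proof (rule measurable_compose_countable
        [where f = "\<lambda>i x. B (max 0 (real_of_int i / real (Suc n))) (snd x)"])
      show "(\<lambda>x. B (max 0 (real_of_int i / real (Suc n))) (snd x)) \<in> borel_measurable (lborel \<Otimes>\<^sub>M M)"
        for i
        by (rule measurable_compose[OF measurable_snd borel_measurable_B]) simp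
    qed measurable
    then show ?thesis unfolding grid_def by simp
  qed
  fix x :: "real \<times> 'a" assume "x \<in> space (lborel \<Otimes>\<^sub>M M)"
  then have "snd x \<in> space M" by (auto simp: space_pair_measure)
  then have "continuous_on UNIV (\<lambda>s. B (max 0 s) (snd x))"
    by (intro continuous_on_compose2[OF continuous_on_path]) (auto intro!: continuous_intros)
  then show "(\<lambda>n. B (max 0 (grid n (fst x))) (snd x)) \<longlonglongrightarrow> B (max 0 (fst x)) (snd x)"
    unfolding grid_def
    by (intro isCont_tendsto_compose[OF _ LIMSEQ_floor_grid]) (simp add: continuous_on_eq_continuous_at)
qed

lemma
  assumes "0 \<le> a"
  shows integrable_indicator_exp_increment:
      "integrable M (\<lambda>\<omega>. indicator {a..b} s * c * exp (k * (B (max 0 s) \<omega> - B a \<omega>)))"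
    and integral_indicator_exp_increment:
      "(\<integral>\<omega>. indicator {a..b} s * c * exp (k * (B (max 0 s) \<omega> - B a \<omega>)) \<partial>M)
         = indicator {a..b} s * c * exp (k\<^sup>2 * (s - a) / 2)"
proof -
  have "integrable M (\<lambda>\<omega>. indicator {a..b} s * c * exp (k * (B (max 0 s) \<omega> - B a \<omega>))) \<and>
      (\<integral>\<omega>. indicator {a..b} s * c * exp (k * (B (max 0 s) \<omega> - B a \<omega>)) \<partial>M)
        = indicator {a..b} s * c * exp (k\<^sup>2 * (s - a) / 2)"
  proof (cases "s \<in> {a..b}")
    case True
    then have "max 0 s = s" "a \<le> s" using assms by auto
    then show ?thesis
      using True integrable_exp_increment[OF assms, of s k] integral_exp_increment[OF assms, of s k]
      by simp
  qed simp
  then show "integrable M (\<lambda>\<omega>. indicator {a..b} s * c * exp (k * (B (max 0 s) \<omega> - B a \<omega>)))"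
    and "(\<integral>\<omega>. indicator {a..b} s * c * exp (k * (B (max 0 s) \<omega> - B a \<omega>)) \<partial>M)
      = indicator {a..b} s * c * exp (k\<^sup>2 * (s - a) / 2)"
    by auto
qed

lemma integrable_pair_exp_increment:
  fixes g :: "real \<Rightarrow> real"
  assumes "0 \<le> a" and g: "continuous_on {a..b} g"
  shows "integrable (lborel \<Otimes>\<^sub>M M)
    (\<lambda>(s, \<omega>). indicator {a..b} s * g s * exp (k * (B (max 0 s) \<omega> - B a \<omega>)))"
proof -
  interpret pair_sigma_finite lborel M ..
  have "(\<lambda>s. indicator {a..b} s * g s) \<in> borel_measurable lborel"
    using borel_measurable_continuous_on_indicator[OF _ g] by simp
  then have "(\<lambda>x. indicator {a..b} (fst x) * g (fst x)
      * exp (k * (B (max 0 (fst x)) (snd x) - B a (snd x))))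
      \<in> borel_measurable (lborel \<Otimes>\<^sub>M M)"
    using borel_measurable_path_pair borel_measurable_B[OF \<open>0 \<le> a\<close>] by measurable
  moreover have "integrable lborel (\<lambda>s. \<integral>\<omega>. norm (indicator {a..b} s * g s
      * exp (k * (B (max 0 s) \<omega> - B a \<omega>))) \<partial>M)"
  proof -
    have "continuous_on {a..b} (\<lambda>s. \<bar>g s\<bar> * exp (k\<^sup>2 * (s - a) / 2))"
      by (intro continuous_intros g) auto
    from borel_integrable_compact[OF compact_Icc this]
    have "integrable lborel (\<lambda>s. indicator {a..b} s * \<bar>g s\<bar> * exp (k\<^sup>2 * (s - a) / 2))"
      unfolding set_integrable_def by (simp add: mult.assoc)
    moreover have "(\<integral>\<omega>. norm (indicator {a..b} s * g s * exp (k * (B (max 0 s) \<omega> - B a \<omega>))) \<partial>M)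
        = indicator {a..b} s * \<bar>g s\<bar> * exp (k\<^sup>2 * (s - a) / 2)" for s
      using integral_indicator_exp_increment[OF \<open>0 \<le> a\<close>, of b s "\<bar>g s\<bar>" k]
      by (simp add: abs_mult)
    ultimately show ?thesis by simp
  qed
  ultimately show ?thesis
    using integrable_indicator_exp_increment[OF \<open>0 \<le> a\<close>]
    by (intro Fubini_integrable) (auto simp: case_prod_beta')
qed

lemma lborel_integral_path_exp_increment:
  fixes g :: "real \<Rightarrow> real"
  assumes "0 \<le> a" and g: "continuous_on {a..b} g" and "\<omega> \<in> space M"
  shows "(\<integral>s. indicator {a..b} s * g s * exp (k * (B (max 0 s) \<omega> - B a \<omega>)) \<partial>lborel)
    = integral {a..b} (\<lambda>s. g s * exp (k * (B s \<omega> - B a \<omega>)))"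
proof -
  have "continuous_on {a..b} (\<lambda>s. g s * exp (k * (B s \<omega> - B a \<omega>)))"
    by (intro continuous_intros g continuous_on_path_Icc assms)
  then have "(\<integral>s. indicator {a..b} s * (g s * exp (k * (B s \<omega> - B a \<omega>))) \<partial>lborel)
      = integral {a..b} (\<lambda>s. g s * exp (k * (B s \<omega> - B a \<omega>)))"
    by (rule lborel_integral_indicator_Icc)
  moreover have "(\<lambda>s. indicator {a..b} s * g s * exp (k * (B (max 0 s) \<omega> - B a \<omega>)))
      = (\<lambda>s. indicator {a..b} s * (g s * exp (k * (B s \<omega> - B a \<omega>))))"
    using \<open>0 \<le> a\<close> by (auto simp: indicator_def fun_eq_iff max_def)
  ultimately show ?thesis by (simp only:)
qed

lemma
  fixes g :: "real \<Rightarrow> real"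
  assumes "0 \<le> a" "a \<le> b" and g: "continuous_on {a..b} g"
  shows integrable_integral_exp_increment:
      "integrable M (\<lambda>\<omega>. integral {a..b} (\<lambda>s. g s * exp (k * (B s \<omega> - B a \<omega>))))"
    and integral_integral_exp_increment:
      "(\<integral>\<omega>. integral {a..b} (\<lambda>s. g s * exp (k * (B s \<omega> - B a \<omega>))) \<partial>M)
         = integral {a..b} (\<lambda>s. g s * exp (k\<^sup>2 * (s - a) / 2))"
proof -
  interpret pair_sigma_finite lborel M ..
  interpret swapped: pair_sigma_finite M lborel ..
  define f where "f s \<omega> = indicator {a..b} s * g s * exp (k * (B (max 0 s) \<omega> - B a \<omega>))" for s \<omega>
  have f_int: "integrable (lborel \<Otimes>\<^sub>M M) (case_prod f)"
    unfolding f_def using integrable_pair_exp_increment[OF \<open>0 \<le> a\<close> g] by simp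
  have path_integral: "(\<integral>s. f s \<omega> \<partial>lborel) = integral {a..b} (\<lambda>s. g s * exp (k * (B s \<omega> - B a \<omega>)))"
    if "\<omega> \<in> space M" for \<omega>
    unfolding f_def by (rule lborel_integral_path_exp_increment[OF \<open>0 \<le> a\<close> g that])
  have f_swap_int: "integrable (M \<Otimes>\<^sub>M lborel) (\<lambda>(\<omega>, s). f s \<omega>)"
    using integrable_product_swap[OF f_int] by (simp add: case_prod_beta')
  have "integrable M (\<lambda>\<omega>. \<integral>s. f s \<omega> \<partial>lborel)"
    using swapped.integrable_fst'[OF f_swap_int] by simp
  then show "integrable M (\<lambda>\<omega>. integral {a..b} (\<lambda>s. g s * exp (k * (B s \<omega> - B a \<omega>))))"
    by (rule Bochner_Integration.integrable_cong[THEN iffD1, OF refl path_integral, rotated])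
  have "(\<integral>\<omega>. integral {a..b} (\<lambda>s. g s * exp (k * (B s \<omega> - B a \<omega>))) \<partial>M)
      = (\<integral>\<omega>. (\<integral>s. f s \<omega> \<partial>lborel) \<partial>M)"
    by (intro Bochner_Integration.integral_cong) (simp_all add: path_integral)
  also have "\<dots> = (\<integral>s. (\<integral>\<omega>. f s \<omega> \<partial>M) \<partial>lborel)"
    using Fubini_integral[OF f_int] by simp
  also have "\<dots> = (\<integral>s. indicator {a..b} s * (g s * exp (k\<^sup>2 * (s - a) / 2)) \<partial>lborel)"
    unfolding f_def integral_indicator_exp_increment[OF \<open>0 \<le> a\<close>] by (simp add: mult.assoc)
  also have "\<dots> = integral {a..b} (\<lambda>s. g s * exp (k\<^sup>2 * (s - a) / 2))"
  proof -
    have "continuous_on {a..b} (\<lambda>s. g s * exp (k\<^sup>2 * (s - a) / 2))"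
      by (intro continuous_intros g) auto
    then show ?thesis
      by (rule lborel_integral_indicator_Icc)
  qed
  finally show "(\<integral>\<omega>. integral {a..b} (\<lambda>s. g s * exp (k * (B s \<omega> - B a \<omega>))) \<partial>M)
      = integral {a..b} (\<lambda>s. g s * exp (k\<^sup>2 * (s - a) / 2))" .
qed

lemma
  fixes g :: "real \<Rightarrow> real"
  assumes "0 \<le> a" "a \<le> b" and g: "continuous_on {a..b} g"
    and X: "\<And>\<omega> s. \<omega> \<in> space M \<Longrightarrow> s \<in> {a..b} \<Longrightarrow> X s \<omega> = g s * exp (k * (B s \<omega> - B a \<omega>))"
  shows integrable_integral_exp_increment':
      "integrable M (\<lambda>\<omega>. integral {a..b} (\<lambda>s. X s \<omega>))"
    and integral_integral_exp_increment':
      "(\<integral>\<omega>. integral {a..b} (\<lambda>s. X s \<omega>) \<partial>M) = integral {a..b} (\<lambda>s. g s * exp (k\<^sup>2 * (s - a) / 2))"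
proof -
  have path: "integral {a..b} (\<lambda>s. X s \<omega>) = integral {a..b} (\<lambda>s. g s * exp (k * (B s \<omega> - B a \<omega>)))"
    if "\<omega> \<in> space M" for \<omega>
    using X[OF that] by (intro integral_cong) auto
  have "integrable M (\<lambda>\<omega>. integral {a..b} (\<lambda>s. X s \<omega>))
      \<longleftrightarrow> integrable M (\<lambda>\<omega>. integral {a..b} (\<lambda>s. g s * exp (k * (B s \<omega> - B a \<omega>))))"
    by (rule Bochner_Integration.integrable_cong) (simp_all add: path)
  with integrable_integral_exp_increment[OF assms(1-3)]
  show "integrable M (\<lambda>\<omega>. integral {a..b} (\<lambda>s. X s \<omega>))"
    by simp
  show "(\<integral>\<omega>. integral {a..b} (\<lambda>s. X s \<omega>) \<partial>M) = integral {a..b} (\<lambda>s. g s * exp (k\<^sup>2 * (s - a) / 2))"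
    using integral_integral_exp_increment[OF assms(1-3)]
    by (simp add: path cong: Bochner_Integration.integral_cong)
qed

end

section \<open>Health, mortality and the value function\<close>

text \<open>\<open>health h w\<close> is \<open>H^2\<close> at time \<open>t + w\<close> when started from \<open>h\<close> at time \<open>t\<close>, and
  \<open>W_factor\<close>, \<open>W_factor_dh\<close> are the functions \<open>\<Phi>\<close>, \<open>\<Psi>\<close> above.\<close>

locale health_mortality =
  fixes \<delta> fI m0 m1 \<kappa> \<alpha> p \<beta> :: real
  assumes delta_pos: "0 < \<delta>" and fI_nonneg: "0 \<le> fI" and m1_nonneg: "0 \<le> m1"
    and kappa_nonneg: "0 \<le> \<kappa>" and alpha_le_1: "\<alpha> \<le> 1" and p_lt_1: "p < 1"
begin

definition "health h w = h * exp (- \<delta> * w) + fI / \<delta> * (1 - exp (- \<delta> * w))"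

definition "mortality_deriv x = - \<kappa> * m1 * x powr (- \<kappa> - 1)"

definition "cum_mortality h w = integral {0..w} (\<lambda>u. Mfun m0 m1 \<kappa> (health h u))"

definition "cum_mortality_dh h w = integral {0..w} (\<lambda>u. mortality_deriv (health h u) * exp (- \<delta> * u))"

definition "W_density h w = (1 - \<alpha>) * exp (\<beta> * w + (p - 1) * cum_mortality h w) * health h w"

definition "W_density_dh h w = (1 - \<alpha>) * exp (\<beta> * w + (p - 1) * cum_mortality h w)
    * ((p - 1) * cum_mortality_dh h w * health h w + exp (- \<delta> * w))"

definition "W_factor h L = integral {0..L} (W_density h)"

definition "W_factor_dh h L = integral {0..L} (W_density_dh h)"

lemma health_pos:
  assumes "0 < h" "0 \<le> w"
  shows "0 < health h w"
proof -
  have "0 \<le> fI / \<delta> * (1 - exp (- \<delta> * w))"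
    using assms delta_pos fI_nonneg by simp
  moreover have "0 < h * exp (- \<delta> * w)" using assms by simp
  ultimately show ?thesis unfolding health_def by linarith
qed

lemma continuous_on_health [continuous_intros]:
  "continuous_on S f \<Longrightarrow> continuous_on S g \<Longrightarrow> continuous_on S (\<lambda>x. health (f x) (g x))"
  unfolding health_def by (intro continuous_intros)

lemma has_field_derivative_health: "((\<lambda>h. health h u) has_field_derivative exp (- \<delta> * u)) (at h)"
  unfolding health_def by (auto intro!: derivative_eq_intros)

lemma continuous_on_mortality_health:
  "continuous_on ({0<..} \<times> {0..b}) (\<lambda>(h, u). Mfun m0 m1 \<kappa> (health h u))"
  unfolding case_prod_beta' Mfun_def
  by (intro continuous_intros) (auto simp: health_pos[THEN less_imp_not_eq2])

lemma continuous_on_mortality_deriv_health: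
  "continuous_on ({0<..} \<times> {0..b}) (\<lambda>(h, u). mortality_deriv (health h u) * exp (- \<delta> * u))"
  unfolding case_prod_beta' mortality_deriv_def
  by (intro continuous_intros) (auto simp: health_pos[THEN less_imp_not_eq2])

lemma has_field_derivative_mortality_health:
  assumes "0 < health h u"
  shows "((\<lambda>h. Mfun m0 m1 \<kappa> (health h u)) has_field_derivative
           mortality_deriv (health h u) * exp (- \<delta> * u)) (at h)"
proof -
  have "((\<lambda>h. health h u powr (- \<kappa>)) has_real_derivative
      - \<kappa> * health h u powr (- \<kappa> - 1) * exp (- \<delta> * u)) (at h)"
    by (rule DERIV_chain2[OF has_real_derivative_powr[OF assms] has_field_derivative_health])
  from DERIV_add[OF DERIV_const DERIV_cmult[OF this, of m1], of m0] show ?thesis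
    unfolding Mfun_def mortality_deriv_def by (rule DERIV_cong) (simp add: algebra_simps)
qed

lemma continuous_on_cum_mortality:
  "continuous_on ({0<..} \<times> {0..b}) (\<lambda>(h, w). cum_mortality h w)"
  using continuous_on_integral_upto_param[OF continuous_on_mortality_health]
  unfolding cum_mortality_def by simp

lemma continuous_on_cum_mortality_dh:
  "continuous_on ({0<..} \<times> {0..b}) (\<lambda>(h, w). cum_mortality_dh h w)"
  using continuous_on_integral_upto_param[OF continuous_on_mortality_deriv_health]
  unfolding cum_mortality_dh_def by simp

lemma continuous_on_W_density:
  "continuous_on ({0<..} \<times> {0..b}) (\<lambda>(h, w). W_density h w)"
  unfolding case_prod_beta' W_density_def
  by (intro continuous_intros continuous_on_cum_mortality[unfolded case_prod_beta'])

lemma continuous_on_W_density_dh: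
  "continuous_on ({0<..} \<times> {0..b}) (\<lambda>(h, w). W_density_dh h w)"
  unfolding case_prod_beta' W_density_dh_def
  by (intro continuous_intros continuous_on_cum_mortality[unfolded case_prod_beta']
      continuous_on_cum_mortality_dh[unfolded case_prod_beta'])

lemma continuous_on_W_factor_dh:
  "continuous_on ({0<..} \<times> {0..b}) (\<lambda>(h, L). W_factor_dh h L)"
  using continuous_on_integral_upto_param[OF continuous_on_W_density_dh]
  unfolding W_factor_dh_def by simp

lemma has_field_derivative_cum_mortality:
  assumes "0 < h" "0 \<le> w"
  shows "((\<lambda>h. cum_mortality h w) has_field_derivative cum_mortality_dh h w) (at h)"
  unfolding cum_mortality_def cum_mortality_dh_def
  by (rule has_field_derivative_integral_upto[OF has_field_derivative_mortality_health
        continuous_on_mortality_health continuous_on_mortality_deriv_health \<open>0 < h\<close>])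
    (auto intro: health_pos)

lemma has_field_derivative_W_density:
  assumes "0 < h" "0 \<le> w"
  shows "((\<lambda>h. W_density h w) has_field_derivative W_density_dh h w) (at h)"
  unfolding W_density_def W_density_dh_def
  by (auto intro!: derivative_eq_intros has_field_derivative_cum_mortality[OF assms]
      has_field_derivative_health simp: algebra_simps)

lemma has_field_derivative_W_factor:
  assumes "0 < h" "0 \<le> L"
  shows "((\<lambda>h. W_factor h L) has_field_derivative W_factor_dh h L) (at h)"
  unfolding W_factor_def W_factor_dh_def
  by (rule has_field_derivative_integral_upto[OF has_field_derivative_W_density
        continuous_on_W_density continuous_on_W_density_dh \<open>0 < h\<close>]) auto

lemma cum_mortality_dh_nonpos:
  assumes "0 < h" "0 \<le> w"
  shows "cum_mortality_dh h w \<le> 0"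
proof -
  have "mortality_deriv (health h u) * exp (- \<delta> * u) \<le> 0" for u
    unfolding mortality_deriv_def using m1_nonneg kappa_nonneg
    by (simp add: mult_nonpos_nonneg)
  moreover have "(\<lambda>u. mortality_deriv (health h u) * exp (- \<delta> * u)) integrable_on {0..w}"
    using continuous_on_slice[OF continuous_on_mortality_deriv_health] \<open>0 < h\<close>
    by (simp add: integrable_continuous_real)
  ultimately have "cum_mortality_dh h w \<le> integral {0..w} (\<lambda>u. 0)"
    unfolding cum_mortality_dh_def by (intro integral_le) auto
  then show ?thesis by simp
qed

lemma W_density_dh_nonneg:
  assumes "0 < h" "0 \<le> w"
  shows "0 \<le> W_density_dh h w"
proof -
  have "0 \<le> (p - 1) * cum_mortality_dh h w"
    using p_lt_1 cum_mortality_dh_nonpos[OF assms] by (simp add: mult_nonpos_nonpos)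
  then have "0 \<le> (p - 1) * cum_mortality_dh h w * health h w + exp (- \<delta> * w)"
    using health_pos[OF assms] by (simp add: add_nonneg_pos less_imp_le)
  then show ?thesis
    unfolding W_density_dh_def using alpha_le_1 by simp
qed

lemma W_factor_dh_nonneg:
  assumes "0 < h" "0 \<le> L"
  shows "0 \<le> W_factor_dh h L"
  unfolding W_factor_dh_def
proof (rule integral_nonneg)
  show "W_density_dh h integrable_on {0..L}"
    using continuous_on_slice[OF continuous_on_W_density_dh] \<open>0 < h\<close>
    by (simp add: integrable_continuous_real)
qed (use W_density_dh_nonneg \<open>0 < h\<close> in auto)

end

locale stopping_model = std_brownian_setting M F B + health_mortality \<delta> fI m0 m1 \<kappa> \<alpha> p \<beta>
  for M :: "'a measure" and F B \<delta> fI m0 m1 \<kappa> \<alpha> p \<beta> +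
  fixes T r \<mu> \<sigma> \<rho> I t h \<theta> :: real
  assumes alpha_pos: "0 < \<alpha>" and alpha_less_1: "\<alpha> < 1" and p_def: "p = \<alpha> / (\<alpha> - 1)"
    and theta_def: "\<theta> = theta \<mu> r \<sigma>"
    and beta_def: "\<beta> = - \<rho> + p * (\<rho> - r) - p * \<theta>\<^sup>2 / 2 + p\<^sup>2 * \<theta>\<^sup>2 / 2"
    and r_pos: "0 < r" and I_pos: "0 < I" and t_nonneg: "0 \<le> t" and t_less_T: "t < T"
    and h_pos: "0 < h"
begin

lemma p_neg: "p < 0"
  using alpha_pos alpha_less_1 unfolding p_def by (simp add: divide_pos_neg)

lemma H2_eq_health: "H2 \<delta> fI t' h' s = health h' (s - t')"
  unfolding H2_def health_def by simp

lemma integral_mortality_H2: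
  assumes "0 < h'" "t' \<le> s"
  shows "integral {t'..s} (\<lambda>u. c + Mfun m0 m1 \<kappa> (H2 \<delta> fI t' h' u))
    = c * (s - t') + cum_mortality h' (s - t')"
proof -
  have "(\<lambda>u. Mfun m0 m1 \<kappa> (health h' u)) integrable_on {0..s - t'}"
    using continuous_on_slice[OF continuous_on_mortality_health] \<open>0 < h'\<close>
    by (simp add: integrable_continuous_real)
  from integral_add[OF integrable_const_ivl this, of c]
  show ?thesis
    using integral_shift_Icc[of t' s "\<lambda>u. c + Mfun m0 m1 \<kappa> (health h' u)"] \<open>t' \<le> s\<close>
    unfolding H2_eq_health cum_mortality_def by simp
qed

text \<open>The factor \<open>exp (- ((p * \<theta>)\<^sup>2 * (s - t') / 2))\<close> is the reciprocal of the expectation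
  of the Brownian factor \<open>exp (- (p * \<theta>) * (B s \<omega> - B t' \<omega>))\<close>.\<close>

lemma W_integrand_eq:
  assumes "0 < h'" "t' \<le> s"
  shows "exp (- integral {t'..s} (\<lambda>u. \<rho> + Mfun m0 m1 \<kappa> (H2 \<delta> fI t' h' u)))
         * u_hat \<alpha> (Z2 B r \<mu> \<sigma> \<rho> m0 m1 \<kappa> \<delta> fI t' z h' s \<omega>) (H2 \<delta> fI t' h' s)
       = (z / \<alpha>) powr p * W_density h' (s - t') * exp (- ((p * \<theta>)\<^sup>2 * (s - t') / 2))
           * exp (- (p * \<theta>) * (B s \<omega> - B t' \<omega>))"
proof -
  define w where "w = s - t'"
  define A where "A = cum_mortality h' w"
  define X where "X = (\<rho> - r) * w + A - \<theta> * (B s \<omega> - B t' \<omega>) - \<theta>\<^sup>2 / 2 * w"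
  have Z: "Z2 B r \<mu> \<sigma> \<rho> m0 m1 \<kappa> \<delta> fI t' z h' s \<omega> = z * exp X"
    unfolding Z2_def integral_mortality_H2[OF assms] X_def A_def w_def theta_def by simp
  have "- (\<rho> * w + A) + p * X
      = (\<beta> * w + (p - 1) * A) + (- (p * \<theta>)\<^sup>2 * (s - t') / 2) + (- (p * \<theta>) * (B s \<omega> - B t' \<omega>))"
    unfolding X_def beta_def w_def by (simp add: field_simps power2_eq_square)
  then have exps: "exp (- (\<rho> * w + A)) * exp (p * X)
      = exp (\<beta> * w + (p - 1) * A) * exp (- ((p * \<theta>)\<^sup>2 * (s - t') / 2))
        * exp (- (p * \<theta>) * (B s \<omega> - B t' \<omega>))"
    by (simp flip: exp_add)
  have "exp (- integral {t'..s} (\<lambda>u. \<rho> + Mfun m0 m1 \<kappa> (H2 \<delta> fI t' h' u)))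
         * u_hat \<alpha> (Z2 B r \<mu> \<sigma> \<rho> m0 m1 \<kappa> \<delta> fI t' z h' s \<omega>) (H2 \<delta> fI t' h' s)
      = (1 - \<alpha>) * (z / \<alpha>) powr p * health h' w * (exp (- (\<rho> * w + A)) * exp (p * X))"
    unfolding integral_mortality_H2[OF assms] Z u_hat_mult_exp p_def[symmetric]
    unfolding H2_eq_health w_def[symmetric] A_def[symmetric]
    by (simp only: mult_ac)
  also have "\<dots> = (z / \<alpha>) powr p * W_density h' (s - t') * exp (- ((p * \<theta>)\<^sup>2 * (s - t') / 2))
           * exp (- (p * \<theta>) * (B s \<omega> - B t' \<omega>))"
    unfolding exps W_density_def w_def[symmetric] A_def[symmetric] by (simp only: mult_ac)
  finally show ?thesis .
qed

lemma W_eq: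
  assumes "0 \<le> t'" "t' \<le> T" "0 < h'"
  shows "W M B T r \<mu> \<sigma> \<rho> m0 m1 \<kappa> \<delta> \<alpha> fI t' z h' = (z / \<alpha>) powr p * W_factor h' (T - t')"
proof -
  define q where "q s = (p * \<theta>)\<^sup>2 * (s - t') / 2" for s
  define g where "g s = (z / \<alpha>) powr p * W_density h' (s - t') * exp (- q s)" for s
  have "continuous_on {t'..T} (\<lambda>s. W_density h' (s - t'))"
  proof (rule continuous_on_compose2[OF continuous_on_slice[OF continuous_on_W_density, of h' "T - t'"]])
    show "continuous_on {t'..T} (\<lambda>s. s - t')" by (intro continuous_intros)
  qed (use \<open>0 < h'\<close> in auto)
  then have g: "continuous_on {t'..T} g"
    unfolding g_def q_def by (intro continuous_intros) auto
  have "W M B T r \<mu> \<sigma> \<rho> m0 m1 \<kappa> \<delta> \<alpha> fI t' z h'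
      = integral {t'..T} (\<lambda>s. g s * exp ((- (p * \<theta>))\<^sup>2 * (s - t') / 2))"
    unfolding W_def
    by (rule integral_integral_exp_increment'[OF assms(1,2) g])
      (simp add: W_integrand_eq[OF \<open>0 < h'\<close>] g_def q_def)
  also have "\<dots> = integral {t'..T} (\<lambda>s. (z / \<alpha>) powr p * W_density h' (s - t'))"
    unfolding g_def q_def by (simp add: mult.assoc flip: exp_add)
  also have "\<dots> = (z / \<alpha>) powr p * W_factor h' (T - t')"
    using integral_shift_Icc[of t' T "W_density h'"] unfolding W_factor_def by simp
  finally show ?thesis .
qed

lemma W_h_eq:
  assumes "0 \<le> t'" "t' \<le> T" "0 < h'"
  shows "W_h M B T r \<mu> \<sigma> \<rho> m0 m1 \<kappa> \<delta> \<alpha> fI t' z h' = (z / \<alpha>) powr p * W_factor_dh h' (T - t')"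
proof -
  have "((\<lambda>x. (z / \<alpha>) powr p * W_factor x (T - t')) has_field_derivative
      (z / \<alpha>) powr p * W_factor_dh h' (T - t')) (at h')"
    by (rule DERIV_cmult[OF has_field_derivative_W_factor]) (use assms in auto)
  then have "((\<lambda>x. W M B T r \<mu> \<sigma> \<rho> m0 m1 \<kappa> \<delta> \<alpha> fI t' z x) has_field_derivative
      (z / \<alpha>) powr p * W_factor_dh h' (T - t')) (at h')"
  proof (rule has_field_derivative_transform_within_open[OF _ open_greaterThan])
    show "(z / \<alpha>) powr p * W_factor x (T - t') = W M B T r \<mu> \<sigma> \<rho> m0 m1 \<kappa> \<delta> \<alpha> fI t' z x"
      if "x \<in> {0<..}" for x
      using W_eq[of t' x z] assms that by simp
  qed (use assms in simp)
  then show ?thesis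
    unfolding W_h_def by (rule DERIV_imp_deriv)
qed

section \<open>The optimal stopping problem\<close>

definition "cum_discount s = integral {0..s} (\<lambda>u. \<rho> + Mfun m0 m1 \<kappa> (H1 \<delta> h u))"

definition "gain z s \<omega> = I * z * exp (- r * s - \<theta> * B s \<omega> - \<theta>\<^sup>2 / 2 * s)"

definition "penalty z s \<omega> = exp (- cum_discount s) * fI
    * W_h M B T r \<mu> \<sigma> \<rho> m0 m1 \<kappa> \<delta> \<alpha> fI (t + s) (Z1 B r \<mu> \<sigma> \<rho> m0 m1 \<kappa> \<delta> z h s \<omega>) (H1 \<delta> h s)"

text \<open>\<open>(z / \<alpha>) powr p * penalty_rate s\<close> is the expectation of \<open>penalty z s\<close>.\<close>

definition "penalty_rate s = fI * exp ((p - 1) * cum_discount s - p * r * s + (p\<^sup>2 - p) * \<theta>\<^sup>2 / 2 * s)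
    * W_factor_dh (H1 \<delta> h s) (T - (t + s))"

definition "annuity = integral {0..T - t} (\<lambda>s. exp (- r * s))"

definition "mean_penalty = integral {0..T - t} penalty_rate"

definition "admissible_stopping_times = {\<tau>. stopping_time F \<tau> \<and> (\<forall>\<omega>\<in>space M. 0 \<le> \<tau> \<omega> \<and> \<tau> \<omega> \<le> T - t)}"

lemma J_hat_eq:
  "J_hat M F B T r \<mu> \<sigma> \<rho> m0 m1 \<kappa> \<delta> \<alpha> I fI t z h
     = (SUP \<tau>\<in>admissible_stopping_times.
          ereal (\<integral>\<omega>. integral {0..\<tau> \<omega>} (\<lambda>s. gain z s \<omega> - penalty z s \<omega>) \<partial>M))"
  unfolding J_hat_def gain_def penalty_def cum_discount_def admissible_stopping_times_def
    theta_def[symmetric] ..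

lemma H1_pos: "0 < H1 \<delta> h s"
  unfolding H1_def using h_pos by simp

lemma continuous_on_cum_discount: "continuous_on {0..b} cum_discount"
  unfolding cum_discount_def Mfun_def H1_def using h_pos
  by (intro indefinite_integral_continuous_1 integrable_continuous_real continuous_intros) auto

lemma continuous_on_penalty_rate: "continuous_on {0..T - t} penalty_rate"
proof -
  have "continuous_on {0..T - t} (\<lambda>s. (H1 \<delta> h s, T - (t + s)))"
    unfolding H1_def by (intro continuous_intros)
  moreover have "(\<lambda>s. (H1 \<delta> h s, T - (t + s))) ` {0..T - t} \<subseteq> {0<..} \<times> {0..T}"
    using H1_pos t_nonneg by auto
  ultimately have "continuous_on {0..T - t} (\<lambda>s. W_factor_dh (H1 \<delta> h s) (T - (t + s)))"
    using continuous_on_compose2[OF continuous_on_W_factor_dh] by fastforce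
  then show ?thesis
    unfolding penalty_rate_def by (intro continuous_intros continuous_on_cum_discount)
qed

lemma gain_eq:
  "\<omega> \<in> space M \<Longrightarrow> gain z s \<omega> = I * z * exp (- (r + \<theta>\<^sup>2 / 2) * s) * exp (- \<theta> * (B s \<omega> - B 0 \<omega>))"
  unfolding gain_def by (simp add: B_0 algebra_simps flip: exp_add)

lemma penalty_eq:
  assumes "\<omega> \<in> space M" "0 \<le> s" "s \<le> T - t"
  shows "penalty z s \<omega>
    = (z / \<alpha>) powr p * penalty_rate s * exp (- ((p * \<theta>)\<^sup>2 * s / 2)) * exp (- (p * \<theta>) * (B s \<omega> - B 0 \<omega>))"
proof -
  define X where "X = cum_discount s - (r + \<theta>\<^sup>2 / 2) * s - \<theta> * B s \<omega>"
  have "Z1 B r \<mu> \<sigma> \<rho> m0 m1 \<kappa> \<delta> z h s \<omega> = z * exp X"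
    unfolding Z1_def X_def cum_discount_def theta_def by (simp add: algebra_simps)
  moreover have "(z * exp X / \<alpha>) powr p = (z / \<alpha>) powr p * exp (p * X)"
    using powr_mult_exp[of "z / \<alpha>" X p] by simp
  ultimately have "W_h M B T r \<mu> \<sigma> \<rho> m0 m1 \<kappa> \<delta> \<alpha> fI (t + s) (Z1 B r \<mu> \<sigma> \<rho> m0 m1 \<kappa> \<delta> z h s \<omega>) (H1 \<delta> h s)
      = (z / \<alpha>) powr p * exp (p * X) * W_factor_dh (H1 \<delta> h s) (T - (t + s))"
    using W_h_eq[of "t + s" "H1 \<delta> h s"] assms t_nonneg H1_pos by simp
  moreover have "- cum_discount s + p * X
      = ((p - 1) * cum_discount s - p * r * s + (p\<^sup>2 - p) * \<theta>\<^sup>2 / 2 * s)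
        + (- ((p * \<theta>)\<^sup>2 * s / 2)) + (- (p * \<theta>) * (B s \<omega> - B 0 \<omega>))"
    unfolding X_def using B_0[OF assms(1)] by (simp add: field_simps power2_eq_square)
  ultimately show ?thesis
    unfolding penalty_def penalty_rate_def by (simp add: mult_ac flip: exp_add)
qed

lemma penalty_nonneg:
  assumes "0 \<le> s" "s \<le> T - t"
  shows "0 \<le> penalty z s \<omega>"
  unfolding penalty_def using W_h_eq[of "t + s" "H1 \<delta> h s"] assms t_nonneg H1_pos fI_nonneg
  by (simp add: W_factor_dh_nonneg)

lemma
  shows integrable_integral_gain: "integrable M (\<lambda>\<omega>. integral {0..T - t} (\<lambda>s. gain z s \<omega>))"
    and integral_integral_gain: "(\<integral>\<omega>. integral {0..T - t} (\<lambda>s. gain z s \<omega>) \<partial>M) = I * z * annuity"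
proof -
  have g: "continuous_on {0..T - t} (\<lambda>s. I * z * exp (- (r + \<theta>\<^sup>2 / 2) * s))"
    by (intro continuous_intros)
  show "integrable M (\<lambda>\<omega>. integral {0..T - t} (\<lambda>s. gain z s \<omega>))"
    using t_less_T
    by (intro integrable_integral_exp_increment'[OF _ _ g, where k = "- \<theta>"]) (auto simp: gain_eq)
  have "(\<integral>\<omega>. integral {0..T - t} (\<lambda>s. gain z s \<omega>) \<partial>M)
      = integral {0..T - t} (\<lambda>s. I * z * exp (- (r + \<theta>\<^sup>2 / 2) * s) * exp ((- \<theta>)\<^sup>2 * (s - 0) / 2))"
    using t_less_T by (intro integral_integral_exp_increment'[OF _ _ g]) (auto simp: gain_eq)
  also have "\<dots> = I * z * annuity"
    unfolding annuity_def by (simp add: algebra_simps flip: exp_add)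
  finally show "(\<integral>\<omega>. integral {0..T - t} (\<lambda>s. gain z s \<omega>) \<partial>M) = I * z * annuity" .
qed

lemma
  shows integrable_integral_penalty: "integrable M (\<lambda>\<omega>. integral {0..T - t} (\<lambda>s. penalty z s \<omega>))"
    and integral_integral_penalty:
      "(\<integral>\<omega>. integral {0..T - t} (\<lambda>s. penalty z s \<omega>) \<partial>M) = (z / \<alpha>) powr p * mean_penalty"
proof -
  have g: "continuous_on {0..T - t} (\<lambda>s. (z / \<alpha>) powr p * penalty_rate s * exp (- ((p * \<theta>)\<^sup>2 * s / 2)))"
    by (intro continuous_intros continuous_on_penalty_rate) auto
  show "integrable M (\<lambda>\<omega>. integral {0..T - t} (\<lambda>s. penalty z s \<omega>))"
    using t_less_T
    by (intro integrable_integral_exp_increment'[OF _ _ g, where k = "- (p * \<theta>)"])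
      (auto simp: penalty_eq)
  have "(\<integral>\<omega>. integral {0..T - t} (\<lambda>s. penalty z s \<omega>) \<partial>M)
      = integral {0..T - t} (\<lambda>s. (z / \<alpha>) powr p * penalty_rate s * exp (- ((p * \<theta>)\<^sup>2 * s / 2))
          * exp ((- (p * \<theta>))\<^sup>2 * (s - 0) / 2))"
    using t_less_T by (intro integral_integral_exp_increment'[OF _ _ g]) (auto simp: penalty_eq)
  also have "\<dots> = (z / \<alpha>) powr p * mean_penalty"
    unfolding mean_penalty_def by (simp add: mult.assoc flip: exp_add)
  finally show "(\<integral>\<omega>. integral {0..T - t} (\<lambda>s. penalty z s \<omega>) \<partial>M) = (z / \<alpha>) powr p * mean_penalty" .
qed

lemma annuity_pos: "0 < annuity"
proof -
  have int: "(\<lambda>s. exp (- r * s)) integrable_on {0..T - t}"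
    by (intro integrable_continuous_real continuous_intros)
  have "integral {0..T - t} (\<lambda>s. exp (- r * (T - t))) \<le> annuity"
    unfolding annuity_def
    by (rule integral_le[OF integrable_const_ivl int]) (use r_pos in \<open>auto simp: mult_left_mono\<close>)
  moreover have "0 < integral {0..T - t} (\<lambda>s. exp (- r * (T - t)))"
    using t_less_T by simp
  ultimately show ?thesis by linarith
qed

lemma gain_integrable_on:
  "\<omega> \<in> space M \<Longrightarrow> (\<lambda>s. gain z s \<omega>) integrable_on {0..T - t}"
  unfolding gain_def
  by (intro integrable_continuous_real continuous_intros continuous_on_path_Icc) simp_all

lemma penalty_integrable_on:
  assumes "\<omega> \<in> space M"
  shows "(\<lambda>s. penalty z s \<omega>) integrable_on {0..T - t}"
proof (rule integrable_eq)
  show "(\<lambda>s. (z / \<alpha>) powr p * penalty_rate s * exp (- ((p * \<theta>)\<^sup>2 * s / 2))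
      * exp (- (p * \<theta>) * (B s \<omega> - B 0 \<omega>))) integrable_on {0..T - t}"
    using assms
    by (intro integrable_continuous_real continuous_intros continuous_on_penalty_rate continuous_on_path_Icc)
      simp_all
qed (use assms penalty_eq in simp)

lemma integral_gain_penalty_le:
  assumes "0 \<le> z" and "\<tau> \<in> admissible_stopping_times"
  shows "(\<integral>\<omega>. integral {0..\<tau> \<omega>} (\<lambda>s. gain z s \<omega> - penalty z s \<omega>) \<partial>M) \<le> I * z * annuity"
proof -
  have gain_nonneg: "0 \<le> gain z s \<omega>" for s \<omega>
    unfolding gain_def using I_pos \<open>0 \<le> z\<close> by simp
  have "(\<integral>\<omega>. integral {0..\<tau> \<omega>} (\<lambda>s. gain z s \<omega> - penalty z s \<omega>) \<partial>M)
      \<le> (\<integral>\<omega>. integral {0..T - t} (\<lambda>s. gain z s \<omega>) \<partial>M)"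
  proof (rule integral_mono'[OF integrable_integral_gain])
    fix \<omega> assume "\<omega> \<in> space M"
    then have "0 \<le> \<tau> \<omega>" "\<tau> \<omega> \<le> T - t"
      using \<open>\<tau> \<in> admissible_stopping_times\<close> unfolding admissible_stopping_times_def by auto
    then show "integral {0..\<tau> \<omega>} (\<lambda>s. gain z s \<omega> - penalty z s \<omega>)
        \<le> integral {0..T - t} (\<lambda>s. gain z s \<omega>)"
      by (intro integral_le_integral_nonneg_superinterval gain_integrable_on \<open>\<omega> \<in> space M\<close>)
        (auto simp: gain_nonneg penalty_nonneg)
    show "0 \<le> integral {0..T - t} (\<lambda>s. gain z s \<omega>)"
      by (rule integral_nonneg[OF gain_integrable_on[OF \<open>\<omega> \<in> space M\<close>]]) (simp add: gain_nonneg)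
  qed
  then show ?thesis by (simp add: integral_integral_gain)
qed

lemma integral_gain_penalty_horizon:
  "(\<integral>\<omega>. integral {0..T - t} (\<lambda>s. gain z s \<omega> - penalty z s \<omega>) \<partial>M)
     = I * z * annuity - (z / \<alpha>) powr p * mean_penalty"
proof -
  have "(\<integral>\<omega>. integral {0..T - t} (\<lambda>s. gain z s \<omega> - penalty z s \<omega>) \<partial>M)
      = (\<integral>\<omega>. integral {0..T - t} (\<lambda>s. gain z s \<omega>) - integral {0..T - t} (\<lambda>s. penalty z s \<omega>) \<partial>M)"
    by (intro Bochner_Integration.integral_cong refl integral_diff gain_integrable_on penalty_integrable_on)
  also have "\<dots> = I * z * annuity - (z / \<alpha>) powr p * mean_penalty"
    by (simp add: integrable_integral_gain integrable_integral_penalty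
        integral_integral_gain integral_integral_penalty)
  finally show ?thesis .
qed

lemma J_hat_le:
  "0 \<le> z \<Longrightarrow> J_hat M F B T r \<mu> \<sigma> \<rho> m0 m1 \<kappa> \<delta> \<alpha> I fI t z h \<le> ereal (I * z * annuity)"
  unfolding J_hat_eq by (rule SUP_least) (simp add: integral_gain_penalty_le)

lemma J_hat_nonneg: "0 \<le> J_hat M F B T r \<mu> \<sigma> \<rho> m0 m1 \<kappa> \<delta> \<alpha> I fI t z h"
  unfolding J_hat_eq
proof (rule SUP_upper2)
  show "(\<lambda>_. 0) \<in> admissible_stopping_times"
    unfolding admissible_stopping_times_def using t_less_T by (simp add: stopping_time_const)
qed simp

lemma J_hat_ge:
  "ereal (I * z * annuity - (z / \<alpha>) powr p * mean_penalty)
     \<le> J_hat M F B T r \<mu> \<sigma> \<rho> m0 m1 \<kappa> \<delta> \<alpha> I fI t z h"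
  unfolding J_hat_eq
proof (rule SUP_upper2)
  show "(\<lambda>_. T - t) \<in> admissible_stopping_times"
    unfolding admissible_stopping_times_def using t_less_T by (simp add: stopping_time_const)
qed (simp add: integral_gain_penalty_horizon)

lemma J_hat_tendsto_0: "((\<lambda>z. J_hat M F B T r \<mu> \<sigma> \<rho> m0 m1 \<kappa> \<delta> \<alpha> I fI t z h) \<longlongrightarrow> 0) (at_right 0)"
proof (rule tendsto_sandwich[of "\<lambda>_. 0" _ _ "\<lambda>z. ereal (I * z * annuity)"])
  show "\<forall>\<^sub>F z in at_right 0. J_hat M F B T r \<mu> \<sigma> \<rho> m0 m1 \<kappa> \<delta> \<alpha> I fI t z h \<le> ereal (I * z * annuity)"
    using eventually_at_right_less[of "0::real"] by eventually_elim (simp add: J_hat_le)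
  have "((\<lambda>z. I * z * annuity) \<longlongrightarrow> I * 0 * annuity) (at_right 0)"
    by (intro tendsto_intros)
  then show "((\<lambda>z. ereal (I * z * annuity)) \<longlongrightarrow> 0) (at_right 0)"
    by (simp add: zero_ereal_def)
qed (simp_all add: J_hat_nonneg)

lemma J_hat_tendsto_infinity: "((\<lambda>z. J_hat M F B T r \<mu> \<sigma> \<rho> m0 m1 \<kappa> \<delta> \<alpha> I fI t z h) \<longlongrightarrow> \<infinity>) at_top"
proof -
  have "LIM z at_top. inverse \<alpha> * z :> at_top"
    using alpha_pos
    by (intro filterlim_tendsto_pos_mult_at_top[OF tendsto_const _ filterlim_ident]) simp
  then have "((\<lambda>z. (z / \<alpha>) powr p) \<longlongrightarrow> 0) at_top"
    using p_neg by (intro tendsto_neg_powr) (simp_all add: divide_inverse mult.commute)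
  from tendsto_minus[OF tendsto_mult_left_zero[OF this]]
  have "((\<lambda>z. - ((z / \<alpha>) powr p * mean_penalty)) \<longlongrightarrow> 0) at_top"
    by simp
  moreover have "LIM z at_top. I * annuity * z :> at_top"
    using I_pos annuity_pos
    by (intro filterlim_tendsto_pos_mult_at_top[OF tendsto_const _ filterlim_ident]) simp
  ultimately have "LIM z at_top. - ((z / \<alpha>) powr p * mean_penalty) + I * annuity * z :> at_top"
    by (rule filterlim_tendsto_add_at_top)
  then have "((\<lambda>z. ereal (I * z * annuity - (z / \<alpha>) powr p * mean_penalty)) \<longlongrightarrow> \<infinity>) at_top"
    by (simp add: tendsto_PInfty_eq_at_top algebra_simps)
  then have "\<forall>\<^sub>F z in at_top. ereal y < ereal (I * z * annuity - (z / \<alpha>) powr p * mean_penalty)" for y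
    by (simp add: tendsto_PInfty)
  then have "\<forall>\<^sub>F z in at_top. ereal y < J_hat M F B T r \<mu> \<sigma> \<rho> m0 m1 \<kappa> \<delta> \<alpha> I fI t z h" for y
    by (rule eventually_mono) (rule less_le_trans[OF _ J_hat_ge])
  then show ?thesis
    by (simp add: tendsto_PInfty)
qed

end

theorem proposition4p4:
  fixes M :: "'a measure" and F :: "real \<Rightarrow> 'a measure" and B :: "real \<Rightarrow> 'a \<Rightarrow> real"
    and T r \<mu> \<sigma> \<rho> m0 m1 \<kappa> \<delta> \<alpha> I fI t h :: real
  assumes "usual_filtered_prob_space M F"
    and "std_F_brownian_motion M F B"
    and "T > 0" and "r > 0" and "\<sigma> > 0" and "\<rho> > 0" and "m0 \<ge> 0" and "m1 \<ge> 0"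
    and "\<kappa> > 0" and "\<delta> > 0" and "0 < \<alpha>" and "\<alpha> < 1" and "I > 0" and "fI > 0"
    and "0 \<le> t" and "t < T" and "h > 0"
  shows "((\<lambda>z. J_hat M F B T r \<mu> \<sigma> \<rho> m0 m1 \<kappa> \<delta> \<alpha> I fI t z h) \<longlongrightarrow> 0) (at_right 0) \<and>
         ((\<lambda>z. J_hat M F B T r \<mu> \<sigma> \<rho> m0 m1 \<kappa> \<delta> \<alpha> I fI t z h) \<longlongrightarrow> \<infinity>) at_top"
proof -
  define p \<theta> where "p = \<alpha> / (\<alpha> - 1)" and "\<theta> = theta \<mu> r \<sigma>"
  define \<beta> where "\<beta> = - \<rho> + p * (\<rho> - r) - p * \<theta>\<^sup>2 / 2 + p\<^sup>2 * \<theta>\<^sup>2 / 2"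
  have "p < 0"
    unfolding p_def using assms(11,12) by (simp add: divide_pos_neg)
  interpret stopping_model M F B \<delta> fI m0 m1 \<kappa> \<alpha> p \<beta> T r \<mu> \<sigma> \<rho> I t h \<theta>
    using assms \<open>p < 0\<close> p_def \<theta>_def \<beta>_def by unfold_locales auto
  show ?thesis
    using J_hat_tendsto_0 J_hat_tendsto_infinity ..
qed

end
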